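(* Let $1<d_1<d_2$, let $\tilde{\mathbb{R}}=(-\infty,-1]\cup[1,\infty)$ be equipped with the measure $d\mu(r)=|r|^{d_1-1}dr$ for $r\le-1$ and $d\mu(r)=r^{d_2-1}dr$ for $r\ge1$, let $d_*=d_1\wedge d_2$, and let $S_0(\tilde{\mathbb{R}})=\{f\in C_c^\infty(\tilde{\mathbb{R}}):f(-1)=f(1)=0\}$. Then for every $1\le p<d_*$ there is $C>0$ such that $$\int_{\tilde{\mathbb{R}}}\frac{|f(x)|^p}{|x|^p}\,d\mu(x)\le C\int_{\tilde{\mathbb{R}}}|f'(x)|^p\,d\mu(x)\qquad\forall f\in S_0(\tilde{\mathbb{R}}).$$
   Context: $C_c^\infty(\tilde{\mathbb{R}})$ denotes compactly supported functions that are smooth on each of the half-lines $(-\infty,-1]$ and $[1,\infty)$; $a\wedge b=\min(a,b)$. *)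

theory Defs
  imports "HOL-Analysis.Analysis"
begin

definition deriv_family_on :: "real set \<Rightarrow> (nat \<Rightarrow> real \<Rightarrow> real) \<Rightarrow> (real \<Rightarrow> real) \<Rightarrow> bool" where
  "deriv_family_on S D f \<longleftrightarrow>
     (\<forall>x\<in>S. D 0 x = f x) \<and>
     (\<forall>n. \<forall>x\<in>S. (D n has_real_derivative D (Suc n) x) (at x within S))"

definition smooth_on :: "real set \<Rightarrow> (real \<Rightarrow> real) \<Rightarrow> bool" where
  "smooth_on S f \<longleftrightarrow> (\<exists>D. deriv_family_on S D f)"

(* S_0(R~): compactly supported on R~ = (-\<infinity>,-1] \<union> [1,\<infinity>), smooth on each closed
   half-line, vanishing at -1 and 1.  Values of f outside R~ are irrelevant. *)
definition S0_tilde :: "(real \<Rightarrow> real) set" where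
  "S0_tilde = {f. smooth_on {..-1} f \<and> smooth_on {1..} f \<and>
                  (\<exists>R. \<forall>x. \<bar>x\<bar> \<ge> R \<longrightarrow> f x = 0) \<and> f (-1) = 0 \<and> f 1 = 0}"

definition tderiv :: "(real \<Rightarrow> real) \<Rightarrow> real \<Rightarrow> real" where
  "tderiv f x = (if x \<le> -1 then (THE y. (f has_real_derivative y) (at x within {..-1}))
                 else (THE y. (f has_real_derivative y) (at x within {1..})))"

definition tint :: "real \<Rightarrow> real \<Rightarrow> (real \<Rightarrow> real) \<Rightarrow> real" where
  "tint d1 d2 g = (LINT r:{..-1}|lborel. g r * \<bar>r\<bar> powr (d1 - 1))
                + (LINT r:{1..}|lborel. g r * r powr (d2 - 1))"

end

theory Submission
  imports Defs
begin

text \<open>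
  Reflecting the negative half-line reduces the inequality to the weighted Hardy inequality on
  \<open>[1, \<infinity>)\<close> with weight \<open>r\<^sup>d\<^sup>-\<^sup>1\<close>, \<open>p < d\<close>. For \<open>f\<close> supported in \<open>[1, R]\<close> one has
  \<open>\<bar>f r\<bar> \<le> H r = \<integral>\<^sub>r\<^sup>R \<bar>f'\<bar>\<close>, and integrating \<open>(H + \<epsilon>)\<^sup>p r\<^sup>d\<^sup>-\<^sup>p\<^sup>-\<^sup>1\<close> by parts gives
  \<open>\<integral> (H + \<epsilon>)\<^sup>p r\<^sup>d\<^sup>-\<^sup>p\<^sup>-\<^sup>1 \<le> \<epsilon>\<^sup>p R\<^sup>d\<^sup>-\<^sup>p / (d - p) + p / (d - p) \<integral> (H + \<epsilon>)\<^sup>p\<^sup>-\<^sup>1 \<bar>f'\<bar> r\<^sup>d\<^sup>-\<^sup>p\<close>.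
  Young's inequality with a small parameter absorbs the last integral into the left-hand side,
  and letting \<open>\<epsilon> \<rightarrow> 0\<close> leaves a constant independent of \<open>f\<close> and \<open>R\<close>. The shift by \<open>\<epsilon> > 0\<close> only
  serves to make \<open>(H + \<epsilon>)\<^sup>p\<close> differentiable where \<open>H\<close> vanishes.
\<close>

lemma Youngs_inequality_epsilon:
  fixes p \<delta> :: real
  assumes p: "1 \<le> p" and \<delta>: "0 < \<delta>"
  obtains C where "0 < C"
    and "\<And>X Y. 0 \<le> X \<Longrightarrow> 0 \<le> Y \<Longrightarrow> X powr (p - 1) * Y \<le> \<delta> * X powr p + C * Y powr p"
proof (cases "p = 1")
  case True
  show ?thesis
    by (rule that[of 1]) (use True \<delta> in auto)
next
  case False
  then have p1: "1 < p" using p by simp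
  define q where "q = p / (p - 1)"
  have q: "1 < q" "1 / q + 1 / p = 1" using p1 by (auto simp: q_def field_simps)
  define t where "t = (\<delta> * q) powr (1 / q)"
  have t: "0 < t" "t powr q / q = \<delta>" using \<delta> q by (auto simp: t_def powr_powr)
  show ?thesis
  proof (rule that[of "t powr (- p) / p"])
    show "0 < t powr (- p) / p" using p1 t by simp
    fix X Y :: real assume X: "0 \<le> X" and Y: "0 \<le> Y"
    have "X powr (p - 1) * Y = (t * X powr (p - 1)) * (Y / t)" using t by simp
    also have "\<dots> \<le> (t * X powr (p - 1)) powr q / q + (Y / t) powr p / p"
      using Youngs_inequality[of q p "t * X powr (p - 1)" "Y / t"] q p1 t X Y by simp
    also have "(t * X powr (p - 1)) powr q = t powr q * X powr p"
      using t X p1 by (simp add: powr_mult powr_powr q_def)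
    also have "(Y / t) powr p = t powr (- p) * Y powr p"
      using t Y by (simp add: powr_divide powr_minus_divide)
    finally show "X powr (p - 1) * Y \<le> \<delta> * X powr p + t powr (- p) / p * Y powr p"
      by (simp flip: t(2))
  qed
qed

lemma Youngs_inequality_epsilon_weighted:
  fixes p d \<delta> C g h r :: real
  assumes young: "\<And>X Y. 0 \<le> X \<Longrightarrow> 0 \<le> Y \<Longrightarrow> X powr (p - 1) * Y \<le> \<delta> * X powr p + C * Y powr p"
    and "0 < p" "0 \<le> g" "0 \<le> h" "0 < r"
  shows "g powr (p - 1) * h * r powr (d - p)
           \<le> \<delta> * (g powr p * r powr (d - p - 1)) + C * (h powr p * r powr (d - 1))"
proof -
  define X where "X = g * r powr ((d - p - 1) / p)"
  define Y where "Y = h * r powr ((d - 1) / p)"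
  have exp: "(d - 1) / p + (p - 1) * (d - p - 1) / p = d - p" using assms by (simp add: field_simps)
  have "X powr (p - 1) * Y = g powr (p - 1) * h * r powr (d - p)"
    using assms by (simp add: X_def Y_def powr_mult powr_powr powr_add[symmetric] exp mult_ac)
  moreover have "X powr p = g powr p * r powr (d - p - 1)" "Y powr p = h powr p * r powr (d - 1)"
    using assms by (simp_all add: X_def Y_def powr_mult powr_powr)
  moreover have "0 \<le> X" "0 \<le> Y" using assms by (simp_all add: X_def Y_def)
  ultimately show ?thesis using young by metis
qed

lemma field_le_mult_epsilon:
  fixes x y M :: real
  assumes "0 \<le> M" and le: "\<And>\<epsilon>. 0 < \<epsilon> \<Longrightarrow> \<epsilon> \<le> 1 \<Longrightarrow> x \<le> y + \<epsilon> * M"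
  shows "x \<le> y"
proof (rule field_le_epsilon)
  fix e :: real assume "0 < e"
  define \<epsilon> where "\<epsilon> = min 1 (e / (M + 1))"
  have "0 < \<epsilon>" "\<epsilon> \<le> 1" using \<open>0 < e\<close> \<open>0 \<le> M\<close> by (auto simp: \<epsilon>_def)
  have "\<epsilon> * M \<le> e / (M + 1) * M" using \<open>0 \<le> M\<close> by (intro mult_right_mono) (auto simp: \<epsilon>_def)
  also have "\<dots> \<le> e" using \<open>0 \<le> M\<close> \<open>0 < e\<close> by (simp add: field_simps)
  finally show "x \<le> y + e" using le[OF \<open>0 < \<epsilon>\<close> \<open>\<epsilon> \<le> 1\<close>] by linarith
qed

lemma integral_powr_weight_by_parts_le:
  fixes G h :: "real \<Rightarrow> real" and s R a p :: real
  assumes "0 < s" "s \<le> R" "0 < a"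
    and G': "\<And>r. r \<in> {s..R} \<Longrightarrow> (G has_real_derivative - h r) (at r within {s..R})"
    and G_pos: "\<And>r. r \<in> {s..R} \<Longrightarrow> 0 < G r"
    and h: "continuous_on {s..R} h"
  shows "integral {s..R} (\<lambda>r. G r powr p * r powr (a - 1))
           \<le> G R powr p * R powr a / a + p / a * integral {s..R} (\<lambda>r. G r powr (p - 1) * h r * r powr a)"
proof -
  define F where "F r = G r powr p * r powr a / a" for r
  have G: "continuous_on {s..R} G" using G' by (rule DERIV_continuous_on)
  have int1: "(\<lambda>r. G r powr p * r powr (a - 1)) integrable_on {s..R}"
    using G_pos \<open>0 < s\<close> by (intro integrable_continuous_interval continuous_intros G) force+
  have int2: "(\<lambda>r. G r powr (p - 1) * h r * r powr a) integrable_on {s..R}"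
    using G_pos \<open>0 < s\<close> by (intro integrable_continuous_interval continuous_intros G h) force+
  have int2': "(\<lambda>r. p / a * (G r powr (p - 1) * h r * r powr a)) integrable_on {s..R}"
    using int2 by (rule integrable_on_mult_right)
  have "((\<lambda>r. G r powr p * r powr (a - 1) - p / a * (G r powr (p - 1) * h r * r powr a))
          has_integral F R - F s) {s..R}"
  proof (intro fundamental_theorem_of_calculus[OF \<open>s \<le> R\<close>]
      has_real_derivative_iff_has_vector_derivative[THEN iffD1])
    fix r assume r: "r \<in> {s..R}"
    then have "0 < r" "0 < G r" using \<open>0 < s\<close> G_pos by auto
    show "(F has_real_derivative G r powr p * r powr (a - 1) - p / a * (G r powr (p - 1) * h r * r powr a))
            (at r within {s..R})"
      unfolding F_def using \<open>0 < r\<close> \<open>0 < G r\<close> \<open>0 < a\<close>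
      by (auto intro!: derivative_eq_intros G'[OF r] simp: field_simps powr_diff)
  qed
  then have "integral {s..R} (\<lambda>r. G r powr p * r powr (a - 1))
               - p / a * integral {s..R} (\<lambda>r. G r powr (p - 1) * h r * r powr a) = F R - F s"
    unfolding integral_mult_right[symmetric] integral_diff[OF int1 int2', symmetric]
    by (rule integral_unique)
  moreover have "0 \<le> F s" using \<open>0 < a\<close> by (simp add: F_def)
  ultimately show ?thesis by (simp add: F_def)
qed

lemma hardy_inequality_interval_regularized:
  fixes h :: "real \<Rightarrow> real" and d p R \<epsilon> C :: real
  assumes "p < d" "1 \<le> p" "1 \<le> R" "0 < \<epsilon>"
    and h: "continuous_on {1..R} h" "\<And>r. r \<in> {1..R} \<Longrightarrow> 0 \<le> h r"
    and young: "\<And>X Y. 0 \<le> X \<Longrightarrow> 0 \<le> Y \<Longrightarrow>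
                  X powr (p - 1) * Y \<le> (d - p) / (2 * p) * X powr p + C * Y powr p"
  shows "integral {1..R} (\<lambda>r. (integral {r..R} h + \<epsilon>) powr p * r powr (d - p - 1))
           \<le> 2 * \<epsilon> powr p * R powr (d - p) / (d - p)
              + 2 * p * C / (d - p) * integral {1..R} (\<lambda>r. h r powr p * r powr (d - 1))"
proof -
  define a where "a = d - p"
  define G where "G r = integral {r..R} h + \<epsilon>" for r
  have "0 < a" using \<open>p < d\<close> by (simp add: a_def)
  have G': "(G has_real_derivative - h r) (at r within {1..R})" if "r \<in> {1..R}" for r
    unfolding G_def by (auto intro!: derivative_eq_intros integral_has_real_derivative'[OF h(1) that])
  have G_ge: "\<epsilon> \<le> G r" if r: "r \<in> {1..R}" for r
  proof -
    have "continuous_on {r..R} h" using continuous_on_subset[OF h(1)] r by auto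
    then have "0 \<le> integral {r..R} h" using h(2) r by (intro integral_nonneg integrable_continuous_interval) auto
    then show ?thesis by (simp add: G_def)
  qed
  have G: "continuous_on {1..R} G" using G' by (rule DERIV_continuous_on)
  define T1 where "T1 = integral {1..R} (\<lambda>r. G r powr p * r powr (a - 1))"
  define T2 where "T2 = integral {1..R} (\<lambda>r. G r powr (p - 1) * h r * r powr a)"
  define J where "J = integral {1..R} (\<lambda>r. h r powr p * r powr (d - 1))"
  have int1: "(\<lambda>r. G r powr p * r powr (a - 1)) integrable_on {1..R}"
    using G_ge \<open>0 < \<epsilon>\<close> by (intro integrable_continuous_interval continuous_intros G) force+
  have intJ: "(\<lambda>r. h r powr p * r powr (d - 1)) integrable_on {1..R}"
    using h(2) \<open>1 \<le> p\<close>
    by (intro integrable_continuous_interval continuous_intros continuous_on_powr' h(1)) auto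
  have "G R = \<epsilon>" by (simp add: G_def)
  then have by_parts: "T1 \<le> \<epsilon> powr p * R powr a / a + p / a * T2"
    unfolding T1_def T2_def
    using integral_powr_weight_by_parts_le[of 1 R a G h p] \<open>1 \<le> R\<close> \<open>0 < a\<close> G' G_ge \<open>0 < \<epsilon>\<close> h(1)
    by fastforce
  have "T2 \<le> integral {1..R} (\<lambda>r. a / (2 * p) * (G r powr p * r powr (a - 1))
                                    + C * (h r powr p * r powr (d - 1)))"
    unfolding T2_def
  proof (rule integral_le)
    show "(\<lambda>r. G r powr (p - 1) * h r * r powr a) integrable_on {1..R}"
      using G_ge \<open>0 < \<epsilon>\<close> by (intro integrable_continuous_interval continuous_intros G h(1)) force+
    show "(\<lambda>r. a / (2 * p) * (G r powr p * r powr (a - 1)) + C * (h r powr p * r powr (d - 1)))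
            integrable_on {1..R}"
      using int1 intJ by (intro integrable_add integrable_on_mult_right)
    fix r assume r: "r \<in> {1..R}"
    show "G r powr (p - 1) * h r * r powr a
            \<le> a / (2 * p) * (G r powr p * r powr (a - 1)) + C * (h r powr p * r powr (d - 1))"
      using Youngs_inequality_epsilon_weighted[OF young, of "G r" "h r" r d]
        G_ge[OF r] h(2)[OF r] r \<open>0 < \<epsilon>\<close> \<open>1 \<le> p\<close>
      by (simp add: a_def)
  qed
  also have "\<dots> = a / (2 * p) * T1 + C * J"
    unfolding T1_def J_def
    by (simp only: integral_add integrable_on_mult_right int1 intJ integral_mult_right)
  finally have "p / a * T2 \<le> T1 / 2 + p * C / a * J"
    using \<open>0 < a\<close> \<open>1 \<le> p\<close> mult_left_mono[of T2 _ "p / a"] by (simp add: field_simps)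
  with by_parts have "T1 \<le> 2 * \<epsilon> powr p * R powr a / a + 2 * p * C / a * J" by simp
  then show ?thesis by (simp add: T1_def J_def a_def G_def)
qed

lemma hardy_inequality_interval:
  fixes d p :: real
  assumes "p < d" "1 \<le> p"
  obtains K where "0 < K"
    and "\<And>R h u. 1 \<le> R \<Longrightarrow> continuous_on {1..R} h \<Longrightarrow> (\<And>r. r \<in> {1..R} \<Longrightarrow> 0 \<le> h r) \<Longrightarrow>
           continuous_on {1..R} u \<Longrightarrow> (\<And>r. r \<in> {1..R} \<Longrightarrow> \<bar>u r\<bar> \<le> integral {r..R} h) \<Longrightarrow>
           integral {1..R} (\<lambda>r. \<bar>u r\<bar> powr p * r powr (d - p - 1))
             \<le> K * integral {1..R} (\<lambda>r. h r powr p * r powr (d - 1))"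
proof -
  obtain C where "0 < C" and young: "\<And>X Y. 0 \<le> X \<Longrightarrow> 0 \<le> Y \<Longrightarrow>
      X powr (p - 1) * Y \<le> (d - p) / (2 * p) * X powr p + C * Y powr p"
    using Youngs_inequality_epsilon[OF \<open>1 \<le> p\<close>, of "(d - p) / (2 * p)"] assms by auto
  show ?thesis
  proof (rule that[of "2 * p * C / (d - p)"])
    show "0 < 2 * p * C / (d - p)" using assms \<open>0 < C\<close> by simp
    fix R :: real and h u :: "real \<Rightarrow> real"
    assume R: "1 \<le> R" and h: "continuous_on {1..R} h" "\<And>r. r \<in> {1..R} \<Longrightarrow> 0 \<le> h r"
      and u: "continuous_on {1..R} u" "\<And>r. r \<in> {1..R} \<Longrightarrow> \<bar>u r\<bar> \<le> integral {r..R} h"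
    have H: "continuous_on {1..R} (\<lambda>r. integral {r..R} h)"
      by (rule DERIV_continuous_on[OF integral_has_real_derivative'[OF h(1)]])
    let ?J = "integral {1..R} (\<lambda>r. h r powr p * r powr (d - 1))"
    show "integral {1..R} (\<lambda>r. \<bar>u r\<bar> powr p * r powr (d - p - 1)) \<le> 2 * p * C / (d - p) * ?J"
    proof (rule field_le_mult_epsilon)
      show "0 \<le> 2 * R powr (d - p) / (d - p)" using assms by simp
      fix \<epsilon> :: real assume "0 < \<epsilon>" "\<epsilon> \<le> 1"
      have "integral {1..R} (\<lambda>r. \<bar>u r\<bar> powr p * r powr (d - p - 1))
              \<le> integral {1..R} (\<lambda>r. (integral {r..R} h + \<epsilon>) powr p * r powr (d - p - 1))"
      proof (rule integral_le)
        show "(\<lambda>r. \<bar>u r\<bar> powr p * r powr (d - p - 1)) integrable_on {1..R}"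
          using \<open>1 \<le> p\<close>
          by (intro integrable_continuous_interval continuous_intros continuous_on_powr' u(1)) auto
        show "(\<lambda>r. (integral {r..R} h + \<epsilon>) powr p * r powr (d - p - 1)) integrable_on {1..R}"
          using u(2) \<open>0 < \<epsilon>\<close>
          by (intro integrable_continuous_interval continuous_intros H) (force dest: abs_le_D2)+
      next
        fix r assume r: "r \<in> {1..R}"
        have "\<bar>u r\<bar> \<le> integral {r..R} h + \<epsilon>" using u(2)[OF r] \<open>0 < \<epsilon>\<close> by linarith
        then show "\<bar>u r\<bar> powr p * r powr (d - p - 1) \<le> (integral {r..R} h + \<epsilon>) powr p * r powr (d - p - 1)"
          using \<open>1 \<le> p\<close> by (intro mult_right_mono powr_mono2) auto
      qed
      also have "\<dots> \<le> 2 * \<epsilon> powr p * R powr (d - p) / (d - p) + 2 * p * C / (d - p) * ?J"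
        using hardy_inequality_interval_regularized[OF assms R \<open>0 < \<epsilon>\<close> h young] .
      also have "\<epsilon> powr p \<le> \<epsilon>"
        using powr_mono'[of 1 p \<epsilon>] \<open>0 < \<epsilon>\<close> \<open>\<epsilon> \<le> 1\<close> \<open>1 \<le> p\<close> by simp
      then have "2 * \<epsilon> powr p * R powr (d - p) / (d - p) \<le> \<epsilon> * (2 * R powr (d - p) / (d - p))"
        using assms by (simp add: divide_right_mono mult_right_mono)
      finally show "integral {1..R} (\<lambda>r. \<bar>u r\<bar> powr p * r powr (d - p - 1))
                      \<le> 2 * p * C / (d - p) * ?J + \<epsilon> * (2 * R powr (d - p) / (d - p))"
        by linarith
    qed
  qed
qed

lemma abs_le_integral_abs_derivative:
  fixes f f' :: "real \<Rightarrow> real"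
  assumes "r \<le> R" "f R = 0"
    and f': "\<And>x. x \<in> {r..R} \<Longrightarrow> (f has_real_derivative f' x) (at x within {r..R})"
    and "continuous_on {r..R} f'"
  shows "\<bar>f r\<bar> \<le> integral {r..R} (\<lambda>x. \<bar>f' x\<bar>)"
proof -
  have "(f' has_integral f R - f r) {r..R}"
    using \<open>r \<le> R\<close>
    by (intro fundamental_theorem_of_calculus has_real_derivative_iff_has_vector_derivative[THEN iffD1] f')
  then have "\<bar>f r\<bar> = norm (integral {r..R} f')" using \<open>f R = 0\<close> by (simp add: integral_unique)
  also have "\<dots> \<le> integral {r..R} (\<lambda>x. \<bar>f' x\<bar>)"
    using \<open>continuous_on {r..R} f'\<close>
    by (intro integral_norm_bound_integral integrable_continuous_interval continuous_intros) auto
  finally show ?thesis .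
qed

lemma set_integral_atLeast_eq_integral:
  fixes \<phi> :: "real \<Rightarrow> real" and a R :: real
  assumes "continuous_on {a..R} \<phi>" and "\<And>x. R < x \<Longrightarrow> \<phi> x = 0"
  shows "(LINT x:{a..}|lborel. \<phi> x) = integral {a..R} \<phi>"
proof -
  have "(LINT x:{a..}|lborel. \<phi> x) = (LINT x:{a..R}|lborel. \<phi> x)"
    unfolding set_lebesgue_integral_def
    by (rule Bochner_Integration.integral_cong) (auto simp: indicator_def assms(2) not_le)
  also have "\<dots> = integral {a..R} \<phi>"
    using borel_integrable_compact[OF compact_Icc assms(1)]
    by (rule set_borel_integral_eq_integral(2)[unfolded set_integrable_def])
  finally show ?thesis .
qed

lemma set_integral_Iic_reflect:
  fixes g :: "real \<Rightarrow> real"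
  shows "(LINT r:{..-a}|lborel. g r) = (LINT r:{a..}|lborel. g (- r))"
proof -
  have "{r. - r \<in> {..-a}} = {a..}" by auto
  then show ?thesis using set_integral_reflect[of "{..-a}" g] by simp
qed

lemma set_integral_nonneg_lborel:
  fixes g :: "real \<Rightarrow> real"
  assumes "\<And>r. r \<in> A \<Longrightarrow> 0 \<le> g r"
  shows "0 \<le> (LINT r:A|lborel. g r)"
  unfolding set_lebesgue_integral_def
  by (rule Bochner_Integration.integral_nonneg) (simp add: assms indicator_def)

lemma at_within_Ici_neq_bot:
  fixes a x :: real
  assumes "a \<le> x"
  shows "at x within {a..} \<noteq> bot"
proof -
  have "at_right x \<le> at x within {a..}" using assms by (intro at_le) auto
  then show ?thesis using trivial_limit_at_right_real[of x] by (auto simp: bot_unique)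
qed

lemma at_within_Iic_neq_bot:
  fixes a x :: real
  assumes "x \<le> a"
  shows "at x within {..a} \<noteq> bot"
proof -
  have "at_left x \<le> at x within {..a}" using assms by (intro at_le) auto
  then show ?thesis using trivial_limit_at_left_real[of x] by (auto simp: bot_unique)
qed

lemma has_real_derivative_eventually_zero:
  assumes "(f has_real_derivative f') (at x within S)" "x \<in> interior S"
    and "eventually (\<lambda>y. f y = 0) (nhds x)"
  shows "f' = 0"
proof -
  have "(f has_real_derivative f') (at x)"
    using assms(1) unfolding at_within_interior[OF assms(2)] .
  then have "((\<lambda>_. 0) has_real_derivative f') (at x)"
    using DERIV_cong_ev[OF refl assms(3) refl] by blast
  then show ?thesis using DERIV_const DERIV_unique by blast
qed

lemma deriv_family_on_has_real_derivative:
  assumes "deriv_family_on S D f" "x \<in> S"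
  shows "(f has_real_derivative D 1 x) (at x within S)"
proof -
  have "(D 0 has_real_derivative D 1 x) (at x within S)"
    using assms unfolding deriv_family_on_def by simp
  then show ?thesis
    by (rule has_field_derivative_transform_within[OF _ zero_less_one])
      (use assms in \<open>auto simp: deriv_family_on_def\<close>)
qed

lemma deriv_family_on_continuous_on:
  assumes "deriv_family_on S D f"
  shows "continuous_on S (D n)"
  using assms unfolding deriv_family_on_def by (blast intro: DERIV_continuous_on)

lemma deriv_family_on_Ici_eq_0:
  assumes D: "deriv_family_on {a..} D f" and f_zero: "\<And>x. R \<le> x \<Longrightarrow> f x = 0"
    and "a \<le> R" "R < x"
  shows "D 1 x = 0"
proof (rule has_real_derivative_eventually_zero)
  show "(f has_real_derivative D 1 x) (at x within {a..})"
    using deriv_family_on_has_real_derivative[OF D] assms(3,4) by simp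
  show "x \<in> interior {a..}" using assms(3,4) by simp
  show "eventually (\<lambda>y. f y = 0) (nhds x)"
    using eventually_nhds_in_open[of "{R<..}" x] \<open>R < x\<close> by (auto elim!: eventually_mono intro: f_zero)
qed

lemma tderiv_eq_Ici:
  assumes "deriv_family_on {1..} D f" "1 \<le> x"
  shows "tderiv f x = D 1 x"
proof -
  have "(THE y. (f has_real_derivative y) (at x within {1..})) = D 1 x"
    using deriv_family_on_has_real_derivative[OF assms(1)] assms(2)
      has_field_derivative_unique[OF _ _ at_within_Ici_neq_bot[OF assms(2)]]
    by (intro the_equality) auto
  then show ?thesis using assms(2) by (simp add: tderiv_def)
qed

lemma tderiv_eq_Iic:
  assumes "deriv_family_on {..-1} D f" "x \<le> -1"
  shows "tderiv f x = D 1 x"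
proof -
  have "(THE y. (f has_real_derivative y) (at x within {..-1})) = D 1 x"
    using deriv_family_on_has_real_derivative[OF assms(1)] assms(2)
      has_field_derivative_unique[OF _ _ at_within_Iic_neq_bot[OF assms(2)]]
    by (intro the_equality) auto
  then show ?thesis using assms(2) by (simp add: tderiv_def)
qed

lemma deriv_family_on_reflect:
  assumes "deriv_family_on {..-a} D f"
  shows "deriv_family_on {a..} (\<lambda>n x. (-1) ^ n * D n (- x)) (\<lambda>x. f (- x))"
  unfolding deriv_family_on_def
proof (intro conjI ballI allI)
  fix x :: real assume "x \<in> {a..}"
  then show "(-1) ^ 0 * D 0 (- x) = f (- x)" using assms by (simp add: deriv_family_on_def)
next
  fix n and x :: real assume "x \<in> {a..}"
  then have "(D n has_real_derivative D (Suc n) (- x)) (at (- x) within uminus ` {a..})"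
    using assms by (simp add: deriv_family_on_def)
  from DERIV_image_chain[OF this DERIV_minus[OF DERIV_ident]]
  have "((\<lambda>x. D n (- x)) has_real_derivative D (Suc n) (- x) * - 1) (at x within {a..})"
    by (simp add: o_def)
  from DERIV_cmult[OF this, of "(-1) ^ n"]
  show "((\<lambda>x. (-1) ^ n * D n (- x)) has_real_derivative (-1) ^ Suc n * D (Suc n) (- x))
          (at x within {a..})"
    by simp
qed

lemma hardy_inequality_Ici:
  fixes d p :: real
  assumes "p < d" "1 \<le> p"
  obtains C where "0 < C"
    and "\<And>f R. smooth_on {1..} f \<Longrightarrow> (\<And>x. R \<le> x \<Longrightarrow> f x = 0) \<Longrightarrow>
           (LINT r:{1..}|lborel. \<bar>f r\<bar> powr p / \<bar>r\<bar> powr p * r powr (d - 1))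
             \<le> C * (LINT r:{1..}|lborel. \<bar>tderiv f r\<bar> powr p * r powr (d - 1))"
proof -
  obtain K where "0 < K" and hardy: "\<And>R h u. 1 \<le> R \<Longrightarrow> continuous_on {1..R} h \<Longrightarrow>
      (\<And>r. r \<in> {1..R} \<Longrightarrow> 0 \<le> h r) \<Longrightarrow> continuous_on {1..R} u \<Longrightarrow>
      (\<And>r. r \<in> {1..R} \<Longrightarrow> \<bar>u r\<bar> \<le> integral {r..R} h) \<Longrightarrow>
      integral {1..R} (\<lambda>r. \<bar>u r\<bar> powr p * r powr (d - p - 1))
        \<le> K * integral {1..R} (\<lambda>r. h r powr p * r powr (d - 1))"
    using hardy_inequality_interval[OF assms] by blast
  show ?thesis
  proof (rule that[OF \<open>0 < K\<close>])
    fix f :: "real \<Rightarrow> real" and R0 :: real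
    assume "smooth_on {1..} f" and f_supp: "\<And>x. R0 \<le> x \<Longrightarrow> f x = 0"
    then obtain D where D: "deriv_family_on {1..} D f" by (auto simp: smooth_on_def)
    define R where "R = max R0 1"
    have "1 \<le> R" and f_zero: "\<And>x. R \<le> x \<Longrightarrow> f x = 0" using f_supp by (auto simp: R_def)
    have f': "(f has_real_derivative D 1 x) (at x within {1..})" if "1 \<le> x" for x
      using deriv_family_on_has_real_derivative[OF D] that by simp
    have f'_cont: "continuous_on {1..R} (D 1)"
      using deriv_family_on_continuous_on[OF D] by (rule continuous_on_subset) auto
    have "continuous_on {1..} f" by (rule DERIV_continuous_on[where D="D 1"]) (use f' in auto)
    then have f_cont: "continuous_on {1..R} f" by (rule continuous_on_subset) auto
    have f'_zero: "D 1 x = 0" if "R < x" for x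
      using deriv_family_on_Ici_eq_0[OF D f_zero \<open>1 \<le> R\<close> that] .
    have f_bound: "\<bar>f r\<bar> \<le> integral {r..R} (\<lambda>x. \<bar>D 1 x\<bar>)" if "r \<in> {1..R}" for r
      using that f_zero[of R] f'_cont
      by (intro abs_le_integral_abs_derivative DERIV_subset[OF f']) (auto elim: continuous_on_subset)
    have "(LINT r:{1..}|lborel. \<bar>f r\<bar> powr p / \<bar>r\<bar> powr p * r powr (d - 1))
            = integral {1..R} (\<lambda>r. \<bar>f r\<bar> powr p / \<bar>r\<bar> powr p * r powr (d - 1))"
      using \<open>1 \<le> p\<close> f_zero
      by (intro set_integral_atLeast_eq_integral continuous_intros continuous_on_powr' f_cont) auto
    also have "\<dots> = integral {1..R} (\<lambda>r. \<bar>f r\<bar> powr p * r powr (d - p - 1))"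
      by (intro integral_cong) (auto simp: powr_diff)
    also have "\<dots> \<le> K * integral {1..R} (\<lambda>r. \<bar>D 1 r\<bar> powr p * r powr (d - 1))"
      using \<open>1 \<le> R\<close> f'_cont f_cont f_bound by (intro hardy continuous_intros) auto
    also have "integral {1..R} (\<lambda>r. \<bar>D 1 r\<bar> powr p * r powr (d - 1))
                 = (LINT r:{1..}|lborel. \<bar>D 1 r\<bar> powr p * r powr (d - 1))"
      using \<open>1 \<le> p\<close> f'_zero
      by (intro set_integral_atLeast_eq_integral[symmetric] continuous_intros continuous_on_powr' f'_cont)
        auto
    also have "\<dots> = (LINT r:{1..}|lborel. \<bar>tderiv f r\<bar> powr p * r powr (d - 1))"
      by (intro set_lebesgue_integral_cong) (auto simp: tderiv_eq_Ici[OF D])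
    finally show "(LINT r:{1..}|lborel. \<bar>f r\<bar> powr p / \<bar>r\<bar> powr p * r powr (d - 1))
                    \<le> K * (LINT r:{1..}|lborel. \<bar>tderiv f r\<bar> powr p * r powr (d - 1))" .
  qed
qed

lemma hardy_inequality_Iic:
  fixes d p :: real
  assumes "p < d" "1 \<le> p"
  obtains C where "0 < C"
    and "\<And>f R. smooth_on {..-1} f \<Longrightarrow> (\<And>x. x \<le> - R \<Longrightarrow> f x = 0) \<Longrightarrow>
           (LINT r:{..-1}|lborel. \<bar>f r\<bar> powr p / \<bar>r\<bar> powr p * \<bar>r\<bar> powr (d - 1))
             \<le> C * (LINT r:{..-1}|lborel. \<bar>tderiv f r\<bar> powr p * \<bar>r\<bar> powr (d - 1))"
proof -
  obtain C where "0 < C"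
    and hardy: "\<And>f R. smooth_on {1..} f \<Longrightarrow> (\<And>x. R \<le> x \<Longrightarrow> f x = 0) \<Longrightarrow>
      (LINT r:{1..}|lborel. \<bar>f r\<bar> powr p / \<bar>r\<bar> powr p * r powr (d - 1))
        \<le> C * (LINT r:{1..}|lborel. \<bar>tderiv f r\<bar> powr p * r powr (d - 1))"
    using hardy_inequality_Ici[OF assms] by blast
  show ?thesis
  proof (rule that[OF \<open>0 < C\<close>])
    fix f :: "real \<Rightarrow> real" and R :: real
    assume "smooth_on {..-1} f" and f_zero: "\<And>x. x \<le> - R \<Longrightarrow> f x = 0"
    then obtain D where D: "deriv_family_on {..-1} D f" by (auto simp: smooth_on_def)
    note D' = deriv_family_on_reflect[OF D]
    have "(LINT r:{..-1}|lborel. \<bar>f r\<bar> powr p / \<bar>r\<bar> powr p * \<bar>r\<bar> powr (d - 1))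
            = (LINT r:{1..}|lborel. \<bar>f (- r)\<bar> powr p / \<bar>r\<bar> powr p * r powr (d - 1))"
      unfolding set_integral_Iic_reflect by (intro set_lebesgue_integral_cong) auto
    also have "\<dots> \<le> C * (LINT r:{1..}|lborel. \<bar>tderiv (\<lambda>x. f (- x)) r\<bar> powr p * r powr (d - 1))"
      using D' f_zero by (intro hardy[of _ R]) (auto simp: smooth_on_def)
    also have "(LINT r:{1..}|lborel. \<bar>tderiv (\<lambda>x. f (- x)) r\<bar> powr p * r powr (d - 1))
                 = (LINT r:{..-1}|lborel. \<bar>tderiv f r\<bar> powr p * \<bar>r\<bar> powr (d - 1))"
      unfolding set_integral_Iic_reflect
      by (intro set_lebesgue_integral_cong) (auto simp: tderiv_eq_Ici[OF D'] tderiv_eq_Iic[OF D])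
    finally show "(LINT r:{..-1}|lborel. \<bar>f r\<bar> powr p / \<bar>r\<bar> powr p * \<bar>r\<bar> powr (d - 1))
                    \<le> C * (LINT r:{..-1}|lborel. \<bar>tderiv f r\<bar> powr p * \<bar>r\<bar> powr (d - 1))" .
  qed
qed

theorem lemma3p1:
  fixes d1 d2 p :: real
  assumes "1 < d1" and "d1 < d2"
    and "1 \<le> p" and "p < min d1 d2"
  shows "\<exists>C>0. \<forall>f\<in>S0_tilde.
           tint d1 d2 (\<lambda>x. \<bar>f x\<bar> powr p / \<bar>x\<bar> powr p)
             \<le> C * tint d1 d2 (\<lambda>x. \<bar>tderiv f x\<bar> powr p)"
proof -
  obtain C1 where "0 < C1"
    and left: "\<And>f R. smooth_on {..-1} f \<Longrightarrow> (\<And>x. x \<le> - R \<Longrightarrow> f x = 0) \<Longrightarrow>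
      (LINT r:{..-1}|lborel. \<bar>f r\<bar> powr p / \<bar>r\<bar> powr p * \<bar>r\<bar> powr (d1 - 1))
        \<le> C1 * (LINT r:{..-1}|lborel. \<bar>tderiv f r\<bar> powr p * \<bar>r\<bar> powr (d1 - 1))"
    using hardy_inequality_Iic[of p d1] assms by auto
  obtain C2 where "0 < C2"
    and right: "\<And>f R. smooth_on {1..} f \<Longrightarrow> (\<And>x. R \<le> x \<Longrightarrow> f x = 0) \<Longrightarrow>
      (LINT r:{1..}|lborel. \<bar>f r\<bar> powr p / \<bar>r\<bar> powr p * r powr (d2 - 1))
        \<le> C2 * (LINT r:{1..}|lborel. \<bar>tderiv f r\<bar> powr p * r powr (d2 - 1))"
    using hardy_inequality_Ici[of p d2] assms by auto
  show ?thesis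
  proof (intro exI[of _ "max C1 C2"] conjI ballI)
    show "0 < max C1 C2" using \<open>0 < C1\<close> by simp
    fix f assume "f \<in> S0_tilde"
    then obtain R where "smooth_on {..-1} f" "smooth_on {1..} f" "\<And>x. R \<le> \<bar>x\<bar> \<Longrightarrow> f x = 0"
      by (auto simp: S0_tilde_def)
    then have "tint d1 d2 (\<lambda>x. \<bar>f x\<bar> powr p / \<bar>x\<bar> powr p)
                 \<le> C1 * (LINT r:{..-1}|lborel. \<bar>tderiv f r\<bar> powr p * \<bar>r\<bar> powr (d1 - 1))
                   + C2 * (LINT r:{1..}|lborel. \<bar>tderiv f r\<bar> powr p * r powr (d2 - 1))"
      unfolding tint_def by (intro add_mono left[of _ R] right[of _ R]) auto
    also have "\<dots> \<le> max C1 C2 * tint d1 d2 (\<lambda>x. \<bar>tderiv f x\<bar> powr p)"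
      unfolding tint_def distrib_left
      by (intro add_mono mult_right_mono set_integral_nonneg_lborel) auto
    finally show "tint d1 d2 (\<lambda>x. \<bar>f x\<bar> powr p / \<bar>x\<bar> powr p)
                    \<le> max C1 C2 * tint d1 d2 (\<lambda>x. \<bar>tderiv f x\<bar> powr p)" .
  qed
qed

end
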